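(* In the setting below, assume moreover $\alpha_3\neq0$. The map $(\rho,t)\mapsto(t,g(\rho,t))$ (projection of the multivalued solution $N$ to the $(t,x)$-plane) is singular exactly at the points where $\partial g/\partial\rho=0$, and these are precisely the points with $$t=\frac{\pm A(\rho)(\rho+\alpha_3)^2-\alpha_1\alpha_3+\alpha_0}{\alpha_3\alpha_2}.$$ At such a point (with the same choice of sign), $$x=g(\rho,t)=-\frac{G(\rho)}{\alpha_2}+\frac{\rho(\rho+2\alpha_3)(\rho+\alpha_3)^2A(\rho)^2-\alpha_3^2\alpha_1^2+\alpha_0^2\pm2\alpha_0(\rho+\alpha_3)^2A(\rho)}{2\alpha_3^2\alpha_2}.$$ Thus the caustic is the union of the two curves parametrized by $\rho$ given by these formulas.
   Context: Setting: $p\colon(0,\infty)\to\mathbb{R}$ smooth with $p'>0$, $A(\rho)=\rho^{-1}\sqrt{p'(\rho)}$; constants $\alpha_0,\alpha_1,\alpha_2,\alpha_3$ with $\alpha_2\neq0$; $G$ an antiderivative of $A(\rho)^2(\rho+\alpha_3)$ on an interval $I\subset(0,\infty)$ not containing $-\alpha_3$; $$g(\rho,t)=-\frac{G(\rho)}{\alpha_2}+\frac{\alpha_2^2t^2\rho(\rho+2\alpha_3)+2t\alpha_2\bigl(\alpha_3(\alpha_0+2\alpha_1\rho)+\alpha_1\rho^2\bigr)-(\alpha_0-\alpha_1\alpha_3)^2}{2\alpha_2(\rho+\alpha_3)^2},$$ $U(\rho,t)=\frac{\alpha_2\rho t+\alpha_1\rho+\alpha_0}{\rho+\alpha_3}$.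 The surface $N=\{(t,g(\rho,t),U(\rho,t),\rho)\}$ in the space with coordinates $(t,x,u,\rho)$ is a multivalued solution of the one-dimensional Euler system $\rho_t+(\rho u)_x=0$, $u_t+uu_x+\frac{p'(\rho)}{\rho}\rho_x=0$. The caustic is the set of points where the projection of $N$ to the $(t,x)$-plane is singular. *)

theory Defs
  imports "HOL-Analysis.Analysis"
begin

definition Aof :: "(real \<Rightarrow> real) \<Rightarrow> real \<Rightarrow> real" where
  "Aof p \<rho> = sqrt (deriv p \<rho>) / \<rho>"

definition gfun :: "(real \<Rightarrow> real) \<Rightarrow> real \<Rightarrow> real \<Rightarrow> real \<Rightarrow> real \<Rightarrow> real \<Rightarrow> real \<Rightarrow> real" where
  "gfun G a0 a1 a2 a3 \<rho> t =
     - G \<rho> / a2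
     + (a2^2 * t^2 * \<rho> * (\<rho> + 2*a3) + 2 * t * a2 * (a3 * (a0 + 2*a1*\<rho>) + a1 * \<rho>^2)
        - (a0 - a1*a3)^2) / (2 * a2 * (\<rho> + a3)^2)"

definition singular_at :: "(real \<times> real \<Rightarrow> real \<times> real) \<Rightarrow> real \<times> real \<Rightarrow> bool" where
  "singular_at F z \<longleftrightarrow> (\<exists>F'. (F has_derivative F') (at z) \<and> \<not> bij F')"

definition t_caus :: "(real \<Rightarrow> real) \<Rightarrow> real \<Rightarrow> real \<Rightarrow> real \<Rightarrow> real \<Rightarrow> real \<Rightarrow> real \<Rightarrow> real" where
  "t_caus p a0 a1 a2 a3 s \<rho> = (s * Aof p \<rho> * (\<rho> + a3)^2 - a1*a3 + a0) / (a3 * a2)"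

definition x_caus :: "(real \<Rightarrow> real) \<Rightarrow> (real \<Rightarrow> real) \<Rightarrow> real \<Rightarrow> real \<Rightarrow> real \<Rightarrow> real \<Rightarrow> real \<Rightarrow> real \<Rightarrow> real" where
  "x_caus p G a0 a1 a2 a3 s \<rho> =
     - G \<rho> / a2
     + (\<rho> * (\<rho> + 2*a3) * (\<rho> + a3)^2 * (Aof p \<rho>)^2 - a3^2 * a1^2 + a0^2
        + s * 2 * a0 * (\<rho> + a3)^2 * Aof p \<rho>) / (2 * a3^2 * a2)"

end

theory Submission imports Defs begin

text \<open>The map \<open>(\<rho>, t) \<mapsto> (t, g(\<rho>, t))\<close> has Jacobian determinant \<open>-\<partial>g/\<partial>\<rho>\<close>, so it is
  singular exactly where \<open>\<partial>g/\<partial>\<rho>\<close> vanishes. Writing \<open>w = \<alpha>\<^sub>2\<alpha>\<^sub>3t - (\<alpha>\<^sub>0 - \<alpha>\<^sub>1\<alpha>\<^sub>3)\<close>, one computes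
  \<open>\<partial>g/\<partial>\<rho> = (w\<^sup>2 - A(\<rho>)\<^sup>2(\<rho> + \<alpha>\<^sub>3)\<^sup>4) / (\<alpha>\<^sub>2(\<rho> + \<alpha>\<^sub>3)\<^sup>3)\<close>, which vanishes iff
  \<open>w = \<plusminus>A(\<rho>)(\<rho> + \<alpha>\<^sub>3)\<^sup>2\<close>; substituting the resulting \<open>t\<close> into \<open>g\<close> gives the caustic curves.\<close>

lemma bij_shear_iff:
  "bij (\<lambda>h::real \<times> real. (snd h, d1 * fst h + d2 * snd h)) \<longleftrightarrow> d1 \<noteq> 0"
proof
  assume b: "bij (\<lambda>h::real \<times> real. (snd h, d1 * fst h + d2 * snd h))"
  show "d1 \<noteq> 0"
  proof
    assume "d1 = 0"
    then have "(\<lambda>h::real \<times> real. (snd h, d1 * fst h + d2 * snd h)) (1, 0)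
             = (\<lambda>h::real \<times> real. (snd h, d1 * fst h + d2 * snd h)) (0, 0)"
      by simp
    from injD[OF bij_is_inj[OF b] this] show False by simp
  qed
next
  assume d: "d1 \<noteq> 0"
  show "bij (\<lambda>h::real \<times> real. (snd h, d1 * fst h + d2 * snd h))"
  proof (rule bijI)
    show "inj (\<lambda>h::real \<times> real. (snd h, d1 * fst h + d2 * snd h))"
      using d by (auto simp: inj_def prod_eq_iff)
    show "surj (\<lambda>h::real \<times> real. (snd h, d1 * fst h + d2 * snd h))"
    proof (rule surjI)
      fix y :: "real \<times> real"
      show "(snd ((snd y - d2 * fst y) / d1, fst y),
             d1 * fst ((snd y - d2 * fst y) / d1, fst y) + d2 * snd ((snd y - d2 * fst y) / d1, fst y)) = y"
        using d by (simp add: prod_eq_iff field_simps)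
    qed
  qed
qed

lemma singular_at_iff_has_derivative:
  assumes "(F has_derivative F') (at z)"
  shows "singular_at F z \<longleftrightarrow> \<not> bij F'"
  using has_derivative_unique[OF _ assms] assms unfolding singular_at_def by blast

lemma
  fixes g :: "real \<times> real \<Rightarrow> real"
  assumes g: "(g has_derivative (\<lambda>h. d1 * fst h + d2 * snd h)) (at z)"
  shows has_derivative_graph_map:
      "((\<lambda>z. (snd z, g z)) has_derivative (\<lambda>h. (snd h, d1 * fst h + d2 * snd h))) (at z)"
    and singular_at_graph_map_iff: "singular_at (\<lambda>z. (snd z, g z)) z \<longleftrightarrow> d1 = 0"
proof -
  show D: "((\<lambda>z. (snd z, g z)) has_derivative (\<lambda>h. (snd h, d1 * fst h + d2 * snd h))) (at z)"
    by (rule has_derivative_Pair[OF has_derivative_snd[OF has_derivative_ident] g])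
  show "singular_at (\<lambda>z. (snd z, g z)) z \<longleftrightarrow> d1 = 0"
    using singular_at_iff_has_derivative[OF D] bij_shear_iff by simp
qed

lemma deriv_partial_fst:
  fixes g :: "real \<times> real \<Rightarrow> real"
  assumes "(g has_derivative (\<lambda>h. d1 * fst h + d2 * snd h)) (at (r, t))"
  shows "deriv (\<lambda>r. g (r, t)) r = d1"
proof -
  have "((\<lambda>r. (r, t)) has_derivative (\<lambda>h. (h, 0))) (at r)"
    by (intro derivative_eq_intros) auto
  from has_derivative_compose[OF this assms]
  have "((\<lambda>r. g (r, t)) has_field_derivative d1) (at r)"
    unfolding has_field_derivative_def by simp
  then show ?thesis by (rule DERIV_imp_deriv)
qed

lemma critical_values_eq_curves:
  assumes "\<And>\<rho> t. \<rho> \<in> I \<Longrightarrow> P \<rho> t \<longleftrightarrow> (\<exists>s\<in>S. t = T s \<rho>)"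
    and "\<And>\<rho> s. \<rho> \<in> I \<Longrightarrow> s \<in> S \<Longrightarrow> F (\<rho>, T s \<rho>) = (T s \<rho>, X s \<rho>)"
  shows "{F (\<rho>, t) | \<rho> t. \<rho> \<in> I \<and> P \<rho> t} = {(T s \<rho>, X s \<rho>) | s \<rho>. s \<in> S \<and> \<rho> \<in> I}"
proof (intro equalityI subsetI)
  fix z assume "z \<in> {F (\<rho>, t) | \<rho> t. \<rho> \<in> I \<and> P \<rho> t}"
  then obtain \<rho> t where \<rho>: "\<rho> \<in> I" and "P \<rho> t" and z: "z = F (\<rho>, t)"
    by blast
  with assms(1) obtain s where s: "s \<in> S" and t: "t = T s \<rho>"
    by blast
  show "z \<in> {(T s \<rho>, X s \<rho>) | s \<rho>. s \<in> S \<and> \<rho> \<in> I}"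
    unfolding z t assms(2)[OF \<rho> s] using \<rho> s by blast
next
  fix z assume "z \<in> {(T s \<rho>, X s \<rho>) | s \<rho>. s \<in> S \<and> \<rho> \<in> I}"
  then obtain \<rho> s where \<rho>: "\<rho> \<in> I" and s: "s \<in> S" and z: "z = (T s \<rho>, X s \<rho>)"
    by blast
  have "P \<rho> (T s \<rho>)"
    using assms(1)[OF \<rho>] s by blast
  then show "z \<in> {F (\<rho>, t) | \<rho> t. \<rho> \<in> I \<and> P \<rho> t}"
    unfolding z assms(2)[OF \<rho> s, symmetric] using \<rho> by blast
qed

lemma gfun_has_derivative:
  assumes G: "(G has_real_derivative GA) (at r)" and a2: "a2 \<noteq> 0" and r: "r + a3 \<noteq> 0"
  shows "((\<lambda>z. gfun G a0 a1 a2 a3 (fst z) (snd z)) has_derivative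
     (\<lambda>h. (- GA / a2 + (a2*a3*t - (a0 - a1*a3))^2 / (a2 * (r+a3)^3)) * fst h
          + (a2*t + a1 - a3*(a2*a3*t - (a0 - a1*a3))/(r+a3)^2) * snd h)) (at (r, t))"
proof -
  have G2: "((\<lambda>z. G (fst z)) has_derivative (\<lambda>h. fst h * GA)) (at (r, t))"
    using has_derivative_compose[OF has_derivative_fst[OF has_derivative_ident], of G "(*) GA" "(r, t)"] G
    unfolding has_field_derivative_def by (simp add: mult.commute)
  obtain u where r_eq: "r = u - a3" and u: "u \<noteq> 0"
    using r by (metis add_diff_cancel)
  show ?thesis
    unfolding gfun_def
    apply (rule has_derivative_eq_rhs)
     apply (rule derivative_eq_intros G2 refl | simp add: r a2)+
    apply (rule ext)
    apply (simp only: r_eq)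
    apply (simp add: field_simps u a2)
    apply algebra
    done
qed

lemma gfun_partial_rho_eq_0_iff:
  fixes A r t a0 a1 a2 a3 :: real
  assumes a2: "a2 \<noteq> 0" and a3: "a3 \<noteq> 0" and r: "r + a3 \<noteq> 0"
  shows "- (A^2 * (r+a3)) / a2 + (a2*a3*t - (a0 - a1*a3))^2 / (a2 * (r+a3)^3) = 0 \<longleftrightarrow>
    (\<exists>s\<in>{1::real, -1}. t = (s * A * (r + a3)^2 - a1*a3 + a0) / (a3 * a2))"
proof -
  define w where "w = a2*a3*t - (a0 - a1*a3)"
  have "- (A^2 * u) / a2 + w^2 / (a2 * u^3) = (w^2 - (A*u^2)^2) / (a2 * u^3)" if "u \<noteq> 0" for u
    using a2 that by (simp add: field_simps power2_eq_square power3_eq_cube)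
  from this[OF r] have "- (A^2 * (r+a3)) / a2 + w^2 / (a2 * (r+a3)^3) = 0 \<longleftrightarrow> w^2 = (A*(r+a3)^2)^2"
    using a2 r by simp
  also have "\<dots> \<longleftrightarrow> w = A*(r+a3)^2 \<or> w = - (A*(r+a3)^2)"
    by (rule power2_eq_iff)
  also have "\<dots> \<longleftrightarrow> (\<exists>s\<in>{1::real, -1}. t = (s * A * (r + a3)^2 - a1*a3 + a0) / (a3 * a2))"
    using a2 a3 unfolding w_def by (auto simp: field_simps)
  finally show ?thesis unfolding w_def .
qed

lemma gfun_at_caustic_time:
  fixes A r t a0 a1 a2 a3 s Gr :: real
  assumes a2: "a2 \<noteq> 0" and a3: "a3 \<noteq> 0" and r: "r + a3 \<noteq> 0" and s: "s\<^sup>2 = 1"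
    and t: "t = (s * A * (r + a3)^2 - a1*a3 + a0) / (a3 * a2)"
  shows "- Gr / a2
     + (a2^2 * t^2 * r * (r + 2*a3) + 2 * t * a2 * (a3 * (a0 + 2*a1*r) + a1 * r^2)
        - (a0 - a1*a3)^2) / (2 * a2 * (r + a3)^2) =
     - Gr / a2
     + (r * (r + 2*a3) * (r + a3)^2 * A^2 - a3^2 * a1^2 + a0^2
        + s * 2 * a0 * (r + a3)^2 * A) / (2 * a3^2 * a2)"
proof -
  obtain u where r_eq: "r = u - a3" and u: "u \<noteq> 0"
    using r by (metis add_diff_cancel)
  have t_eq: "t = (s * A * u^2 - a1*a3 + a0) / (a2*a3)"
    using t r_eq by (simp add: mult.commute)
  show ?thesis
    unfolding t_eq r_eq using u a2 a3
    apply (simp add: field_simps)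
    using s apply algebra
    done
qed

lemma gfun_caustic_at:
  fixes a0 a1 t s :: real
  assumes G: "(G has_real_derivative (Aof p \<rho>)^2 * (\<rho> + a3)) (at \<rho>)"
    and a2: "a2 \<noteq> 0" and a3: "a3 \<noteq> 0" and r: "\<rho> + a3 \<noteq> 0"
  defines "F \<equiv> (\<lambda>(\<rho>, t). (t, gfun G a0 a1 a2 a3 \<rho> t))"
  shows "F differentiable (at (\<rho>, t))"
    and "singular_at F (\<rho>, t) \<longleftrightarrow> deriv (\<lambda>r. gfun G a0 a1 a2 a3 r t) \<rho> = 0"
    and "deriv (\<lambda>r. gfun G a0 a1 a2 a3 r t) \<rho> = 0 \<longleftrightarrow>
           (\<exists>s\<in>{1, -1}. t = t_caus p a0 a1 a2 a3 s \<rho>)"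
    and "s \<in> {1, -1} \<Longrightarrow> t = t_caus p a0 a1 a2 a3 s \<rho> \<Longrightarrow>
           gfun G a0 a1 a2 a3 \<rho> t = x_caus p G a0 a1 a2 a3 s \<rho>"
proof -
  let ?g = "\<lambda>z. gfun G a0 a1 a2 a3 (fst z) (snd z)"
  have F_eq: "F = (\<lambda>z. (snd z, ?g z))"
    unfolding F_def by (rule ext) (simp add: split_beta)
  note g' = gfun_has_derivative[OF G a2 r, of a0 a1 t]
  have partial: "deriv (\<lambda>r. gfun G a0 a1 a2 a3 r t) \<rho>
      = - ((Aof p \<rho>)^2 * (\<rho> + a3)) / a2 + (a2*a3*t - (a0 - a1*a3))^2 / (a2 * (\<rho>+a3)^3)"
    using deriv_partial_fst[OF g'] by simp
  show "F differentiable (at (\<rho>, t))"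
    using has_derivative_graph_map[OF g'] unfolding F_eq differentiable_def by blast
  show "singular_at F (\<rho>, t) \<longleftrightarrow> deriv (\<lambda>r. gfun G a0 a1 a2 a3 r t) \<rho> = 0"
    unfolding F_eq partial using singular_at_graph_map_iff[OF g'] by simp
  show "deriv (\<lambda>r. gfun G a0 a1 a2 a3 r t) \<rho> = 0 \<longleftrightarrow>
           (\<exists>s\<in>{1, -1}. t = t_caus p a0 a1 a2 a3 s \<rho>)"
    unfolding partial t_caus_def by (rule gfun_partial_rho_eq_0_iff[OF a2 a3 r])
  show "gfun G a0 a1 a2 a3 \<rho> t = x_caus p G a0 a1 a2 a3 s \<rho>"
    if "s \<in> {1, -1}" "t = t_caus p a0 a1 a2 a3 s \<rho>"
    unfolding gfun_def x_caus_def
    by (rule gfun_at_caustic_time[OF a2 a3 r]) (use that in \<open>auto simp: t_caus_def\<close>)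
qed

theorem mainTheorem4:
  fixes p G :: "real \<Rightarrow> real" and a0 a1 a2 a3 :: real and I :: "real set"
  assumes smooth: "\<And>n \<rho>. \<rho> > 0 \<Longrightarrow> ((deriv ^^ n) p) differentiable (at \<rho>)"
    and pos: "\<And>\<rho>. \<rho> > 0 \<Longrightarrow> deriv p \<rho> > 0"
    and a2: "a2 \<noteq> 0" and a3: "a3 \<noteq> 0"
    and I: "is_interval I" "open I" "I \<subseteq> {0<..}" "- a3 \<notin> I"
    and G: "\<And>\<rho>. \<rho> \<in> I \<Longrightarrow> (G has_real_derivative (Aof p \<rho>)^2 * (\<rho> + a3)) (at \<rho>)"
  defines "F \<equiv> (\<lambda>(\<rho>, t). (t, gfun G a0 a1 a2 a3 \<rho> t))"
  shows "(\<forall>\<rho>\<in>I. \<forall>t.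
            F differentiable (at (\<rho>, t))
          \<and> (singular_at F (\<rho>, t) \<longleftrightarrow> deriv (\<lambda>r. gfun G a0 a1 a2 a3 r t) \<rho> = 0)
          \<and> (deriv (\<lambda>r. gfun G a0 a1 a2 a3 r t) \<rho> = 0 \<longleftrightarrow>
               (\<exists>s\<in>{1, -1}. t = t_caus p a0 a1 a2 a3 s \<rho>))
          \<and> (\<forall>s\<in>{1, -1}. t = t_caus p a0 a1 a2 a3 s \<rho> \<longrightarrow>
               gfun G a0 a1 a2 a3 \<rho> t = x_caus p G a0 a1 a2 a3 s \<rho>))
       \<and> {F (\<rho>, t) | \<rho> t. \<rho> \<in> I \<and> singular_at F (\<rho>, t)}
         = {(t_caus p a0 a1 a2 a3 s \<rho>, x_caus p G a0 a1 a2 a3 s \<rho>) | s \<rho>. s \<in> {1, -1} \<and> \<rho> \<in> I}"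
proof -
  have r: "\<rho> + a3 \<noteq> 0" if "\<rho> \<in> I" for \<rho>
    using that I(4) by (metis add.commute add_eq_0_iff)
  note caustic = gfun_caustic_at[OF G a2 a3 r, where ?a0.0 = a0 and ?a1.0 = a1, folded F_def]
  have singular_iff: "singular_at F (\<rho>, t) \<longleftrightarrow> (\<exists>s\<in>{1, -1}. t = t_caus p a0 a1 a2 a3 s \<rho>)"
    if "\<rho> \<in> I" for \<rho> t
    using caustic(2,3)[OF that that] by simp
  have F_caustic: "F (\<rho>, t_caus p a0 a1 a2 a3 s \<rho>)
      = (t_caus p a0 a1 a2 a3 s \<rho>, x_caus p G a0 a1 a2 a3 s \<rho>)"
    if "\<rho> \<in> I" "s \<in> {1, -1}" for \<rho> s
    using caustic(4)[OF that(1,1) that(2) refl] unfolding F_def by simp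
  have "{F (\<rho>, t) | \<rho> t. \<rho> \<in> I \<and> singular_at F (\<rho>, t)}
      = {(t_caus p a0 a1 a2 a3 s \<rho>, x_caus p G a0 a1 a2 a3 s \<rho>) | s \<rho>. s \<in> {1, -1} \<and> \<rho> \<in> I}"
    by (rule critical_values_eq_curves[OF singular_iff F_caustic])
  then show ?thesis
    by (intro conjI ballI allI impI caustic) assumption+
qed

end
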